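(* Let $K$ be a field of characteristic $0$. Let $m=x_1^{\alpha_1}\cdots x_n^{\alpha_n}$ be a monomial with $\alpha_i\ge 1$ for all $i$, let $f\in K[x_1,\ldots,x_n]$ be a homogeneous polynomial of degree $d=\alpha_1+\cdots+\alpha_n$, and let $A\in GL_n(K)$ be an invertible matrix. The following two properties are equivalent: (i) $m(A.x)=c\cdot f(x)$ for some constant $c\in K$; (ii) $\mathfrak{g}_f=A^{-1}\,\mathfrak{g}_m\,A$.
   Context: For $P\in K[x_1,\ldots,x_n]$, the Lie algebra $\mathfrak{g}_P$ of $P$ is the Lie algebra (tangent space at the identity) of the group of invariants $\{A\in GL_n(K): P(A.x)=P(x)\}$; equivalently, $\mathfrak{g}_P$ is the linear subspace of matrices $A=(a_{ij})\in M_n(K)$ such that $\sum_{i,j\in[n]} a_{ij}\,x_j\,\frac{\partial P}{\partial x_i}=0$. Here $A.x$ denotes the matrix-vector product, so $P(A.x)$ is the polynomial obtained from $P$ by the linear change of variables $x\mapsto Ax$. *)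

theory Defs
  imports "HOL-Analysis.Analysis" "HOL-Library.Poly_Mapping"
begin

type_synonym ('n, 'a) mpoly = "('n \<Rightarrow>\<^sub>0 nat) \<Rightarrow>\<^sub>0 'a"

definition Const :: "'a::comm_semiring_1 \<Rightarrow> ('n, 'a) mpoly" where
  "Const c = Poly_Mapping.single 0 c"

definition Var :: "'n \<Rightarrow> ('n, 'a::comm_semiring_1) mpoly" where
  "Var i = Poly_Mapping.single (Poly_Mapping.single i 1) 1"

definition monomial_of :: "('n::finite \<Rightarrow> nat) \<Rightarrow> ('n, 'a::comm_semiring_1) mpoly" where
  "monomial_of \<alpha> = (\<Prod>i\<in>UNIV. Var i ^ \<alpha> i)"

definition homogeneous :: "nat \<Rightarrow> ('n::finite, 'a::zero) mpoly \<Rightarrow> bool" where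
  "homogeneous d p \<longleftrightarrow> (\<forall>\<mu>\<in>Poly_Mapping.keys p. (\<Sum>i\<in>UNIV. Poly_Mapping.lookup \<mu> i) = d)"

definition subst :: "('n \<Rightarrow> ('m, 'a) mpoly) \<Rightarrow> ('n, 'a::comm_semiring_1) mpoly \<Rightarrow> ('m, 'a) mpoly" where
  "subst \<sigma> p = (\<Sum>\<mu>\<in>Poly_Mapping.keys p. Const (Poly_Mapping.lookup p \<mu>) * (\<Prod>i\<in>Poly_Mapping.keys \<mu>. \<sigma> i ^ Poly_Mapping.lookup \<mu> i))"

text \<open>P(A.x): the linear change of variables x \<mapsto> A x, i.e. x_i \<mapsto> sum_j a_ij x_j.\<close>
definition lin_change :: "'a^'n^'n \<Rightarrow> ('n::finite, 'a::comm_semiring_1) mpoly \<Rightarrow> ('n, 'a) mpoly" where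
  "lin_change A p = subst (\<lambda>i. \<Sum>j\<in>UNIV. Const (A $ i $ j) * Var j) p"

definition pdiff :: "'n \<Rightarrow> ('n, 'a::comm_semiring_1) mpoly \<Rightarrow> ('n, 'a) mpoly" where
  "pdiff i p = (\<Sum>\<mu>\<in>Poly_Mapping.keys p. Poly_Mapping.single (\<mu> - Poly_Mapping.single i 1)
                                 (of_nat (Poly_Mapping.lookup \<mu> i) * Poly_Mapping.lookup p \<mu>))"

definition lie_alg :: "('n::finite, 'a::comm_ring_1) mpoly \<Rightarrow> ('a^'n^'n) set" where
  "lie_alg P = {A. (\<Sum>i\<in>UNIV. \<Sum>j\<in>UNIV. Const (A $ i $ j) * Var j * pdiff i P) = 0}"

end

theory Submission
  imports Defs
begin

(* Write D_B P = sum_ij B_ij x_j dP/dx_i, so that g_P = {B. D_B P = 0}. By the chain rule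
  D_B (P(A.x)) = (D_{A B A^-1} P)(A.x), hence g_{P(A.x)} = A^-1 g_P A; together with g_{cP} = g_P
  for c ~= 0 this gives (i) => (ii).
  Conversely, (ii) says that h(x) = f(A^-1.x) has g_h = g_m. A diagonal matrix diag(lambda)
  multiplies each monomial x^nu by sum_i lambda_i nu_i, so it lies in g_m iff
  sum_i lambda_i alpha_i = 0, and then it annihilates every monomial of h. Hence every exponent
  of h is proportional to alpha; since h is homogeneous of degree |alpha| (Euler's identity
  D_1 h = |alpha| h is preserved by linear changes of variables), h = c m. Finally c ~= 0: the
  identity matrix lies in the Lie algebra of the zero polynomial but not in g_m. *)

abbreviation (input) lookup where "lookup \<equiv> Poly_Mapping.lookup"
abbreviation (input) keys where "keys \<equiv> Poly_Mapping.keys"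
abbreviation (input) single where "single \<equiv> Poly_Mapping.single"

lemma poly_mapping_induct [case_names zero single add]:
  fixes p :: "'k \<Rightarrow>\<^sub>0 'b::comm_monoid_add"
  assumes "P 0" and "\<And>k v. P (single k v)" and "\<And>p q. P p \<Longrightarrow> P q \<Longrightarrow> P (p + q)"
  shows "P p"
proof -
  have "p = (\<Sum>k\<in>keys p. single k (lookup p k))"
    by (rule poly_mapping_eqI) (simp add: lookup_sum lookup_single when_def in_keys_iff)
  moreover have "P (\<Sum>k\<in>K. single k (lookup p k))" if "finite K" for K
    using that by induction (simp_all add: assms)
  ultimately show ?thesis
    by (metis finite_keys)
qed

lemma sum_keys_add:
  fixes h :: "'k \<Rightarrow> 'b::comm_monoid_add \<Rightarrow> 'c::comm_monoid_add"
  assumes "\<And>k. h k 0 = 0" and "\<And>k a b. h k (a + b) = h k a + h k b"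
  shows "(\<Sum>k\<in>keys (p + q). h k (lookup (p + q) k))
       = (\<Sum>k\<in>keys p. h k (lookup p k)) + (\<Sum>k\<in>keys q. h k (lookup q k))"
proof -
  have extend: "(\<Sum>k\<in>keys r. h k (lookup r k)) = (\<Sum>k\<in>keys p \<union> keys q. h k (lookup r k))"
    if "keys r \<subseteq> keys p \<union> keys q" for r
    by (rule sum.mono_neutral_left) (use that assms(1) in \<open>auto simp: in_keys_iff\<close>)
  have "(\<Sum>k\<in>keys (p + q). h k (lookup (p + q) k))
      = (\<Sum>k\<in>keys p \<union> keys q. h k (lookup (p + q) k))"
    by (rule extend) (rule keys_add)
  also have "\<dots> = (\<Sum>k\<in>keys p \<union> keys q. h k (lookup p k) + h k (lookup q k))"
    by (simp add: lookup_add assms(2))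
  finally show ?thesis
    by (simp add: extend sum.distrib)
qed

section \<open>Substitution and formal partial derivatives\<close>

lemma Const_0 [simp]: "Const 0 = (0 :: ('n, 'a::comm_semiring_1) mpoly)"
  by (simp add: Const_def)

lemma Const_1 [simp]: "Const 1 = (1 :: ('n, 'a::comm_semiring_1) mpoly)"
  by (rule poly_mapping_eqI) (simp add: Const_def lookup_one lookup_single)

lemma Const_add: "Const (a + b) = Const a + (Const b :: ('n, 'a::comm_semiring_1) mpoly)"
  by (simp add: Const_def single_add)

lemma Const_mult: "Const (a * b) = Const a * (Const b :: ('n, 'a::comm_semiring_1) mpoly)"
  by (simp add: Const_def mult_single)

lemma Const_sum: "Const (sum g S) = (\<Sum>x\<in>S. Const (g x) :: ('n, 'a::comm_semiring_1) mpoly)"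
  by (induction S rule: infinite_finite_induct) (simp_all add: Const_add)

lemma Const_mult_single: "Const c * single \<mu> d = (single \<mu> (c * d) :: ('n, 'a::comm_semiring_1) mpoly)"
  by (simp add: Const_def mult_single)

lemma lookup_Const_mult: "lookup (Const c * p) \<mu> = c * lookup (p :: ('n, 'a::comm_semiring_1) mpoly) \<mu>"
proof -
  have "Const c * p = Poly_Mapping.map ((*) c) p"
    by (simp add: Const_def mult_map_scale_conv_mult)
  then show ?thesis
    by (simp add: Poly_Mapping.map.rep_eq when_def)
qed

lemma Const_mult_eq_0_iff:
  "Const c * p = 0 \<longleftrightarrow> c = 0 \<or> p = (0 :: ('n, 'a::{comm_semiring_1,semiring_no_zero_divisors}) mpoly)"
  by (auto simp: poly_mapping_eq_iff fun_eq_iff lookup_Const_mult)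

lemma Const_inverse_mult_cancel:
  "c \<noteq> 0 \<Longrightarrow> Const (inverse c) * (Const c * p) = (p :: ('n, 'a::field) mpoly)"
  by (simp flip: mult.assoc Const_mult)

lemma subst_0 [simp]: "subst \<sigma> 0 = 0"
  by (simp add: subst_def)

lemma subst_single:
  fixes \<sigma> :: "'n::finite \<Rightarrow> ('m, 'a::comm_semiring_1) mpoly"
  shows "subst \<sigma> (single \<mu> c) = Const c * (\<Prod>i\<in>UNIV. \<sigma> i ^ lookup \<mu> i)"
proof (cases "c = 0")
  case False
  have "(\<Prod>i\<in>keys \<mu>. \<sigma> i ^ lookup \<mu> i) = (\<Prod>i\<in>UNIV. \<sigma> i ^ lookup \<mu> i)"
    by (rule prod.mono_neutral_left) (auto simp: in_keys_iff)
  with False show ?thesis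
    by (simp add: subst_def)
qed simp

lemma subst_add: "subst \<sigma> (p + q) = subst \<sigma> p + subst \<sigma> q"
  unfolding subst_def by (rule sum_keys_add) (simp_all add: Const_add distrib_right)

lemma subst_sum: "subst \<sigma> (sum g S) = (\<Sum>x\<in>S. subst \<sigma> (g x))"
  by (induction S rule: infinite_finite_induct) (simp_all add: subst_add)

lemma subst_mult:
  fixes \<sigma> :: "'n::finite \<Rightarrow> ('m, 'a::comm_semiring_1) mpoly"
  shows "subst \<sigma> (p * q) = subst \<sigma> p * subst \<sigma> q"
proof (induction p rule: poly_mapping_induct)
  case (single \<mu> c)
  show ?case
  proof (induction q rule: poly_mapping_induct)
    case (single \<nu> d)
    show ?case
      by (simp add: mult_single subst_single lookup_add power_add prod.distrib Const_mult ac_simps)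
  qed (simp_all add: subst_add distrib_left)
qed (simp_all add: subst_add distrib_right)

lemma subst_Const: "subst \<sigma> (Const c) = Const c"
  by (simp add: Const_def subst_def)

lemma subst_Var: "subst \<sigma> (Var i) = \<sigma> i"
  by (simp add: Var_def subst_def)

lemma pdiff_single: "pdiff i (single \<mu> c) = single (\<mu> - single i 1) (of_nat (lookup \<mu> i) * c)"
  by (cases "c = 0") (simp_all add: pdiff_def)

lemma pdiff_add: "pdiff i (p + q) = pdiff i p + pdiff i q"
  unfolding pdiff_def by (rule sum_keys_add) (simp_all add: distrib_left single_add)

lemma pdiff_0 [simp]: "pdiff i 0 = 0"
  by (simp add: pdiff_def)

lemma pdiff_Const [simp]: "pdiff i (Const c) = 0"
  by (simp add: Const_def pdiff_single)

lemma pdiff_Var: "pdiff i (Var j :: ('n, 'a::comm_semiring_1) mpoly) = (if i = j then 1 else 0)"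
  by (simp add: Var_def pdiff_single lookup_single)

lemma pdiff_mult:
  fixes p q :: "('n, 'a::comm_semiring_1) mpoly"
  shows "pdiff i (p * q) = pdiff i p * q + p * pdiff i q"
proof (induction p rule: poly_mapping_induct)
  case (single \<mu> c)
  show ?case
  proof (induction q rule: poly_mapping_induct)
    case (single \<nu> d)
    \<comment> \<open>both sides vanish when the exponent of x_i is 0, so the truncated subtraction is harmless\<close>
    have shift: "single (\<kappa> - single i 1 + \<rho>) (of_nat (lookup \<kappa> i) * x)
               = single (\<kappa> + \<rho> - single i 1) (of_nat (lookup \<kappa> i) * x :: 'a)" for \<kappa> \<rho> x
    proof (cases "lookup \<kappa> i = 0")
      case False
      then have "\<kappa> - single i 1 + \<rho> = \<kappa> + \<rho> - single i (1::nat)"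
        by (intro poly_mapping_eqI) (auto simp: lookup_add lookup_minus lookup_single when_def)
      then show ?thesis
        by simp
    qed simp
    show ?case
      using shift[of \<mu> \<nu> "c * d"] shift[of \<nu> \<mu> "c * d"]
      by (simp add: pdiff_single mult_single lookup_add single_add[symmetric] algebra_simps)
  qed (simp_all add: pdiff_add distrib_left add_ac)
qed (simp_all add: pdiff_add distrib_right add_ac)

lemma Var_mult_pdiff_single:
  "Var i * pdiff i (single \<mu> c) = (single \<mu> (of_nat (lookup \<mu> i) * c) :: ('n, 'a::comm_semiring_1) mpoly)"
proof (cases "lookup \<mu> i = 0")
  case False
  then have "single i 1 + (\<mu> - single i 1) = \<mu>"
    by (intro poly_mapping_eqI) (auto simp: lookup_add lookup_minus lookup_single when_def)
  then show ?thesis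
    by (simp add: Var_def pdiff_single mult_single)
qed (simp add: pdiff_single)

lemma Var_power: "Var i ^ k = (single (single i k) 1 :: ('n, 'a::comm_semiring_1) mpoly)"
  by (induction k) (simp_all add: Var_def mult_single single_add[symmetric] add.commute flip: Const_def)

lemma prod_single_1:
  "(\<Prod>i\<in>S. single (\<nu> i) 1) = (single (sum \<nu> S) 1 :: ('n, 'a::comm_semiring_1) mpoly)"
  by (induction S rule: infinite_finite_induct) (simp_all add: mult_single flip: Const_def)

lemma single_eq_Const_mult_prod_Var:
  "single \<mu> c = Const c * (\<Prod>i\<in>UNIV. Var i ^ lookup \<mu> i :: ('n::finite, 'a::comm_semiring_1) mpoly)"
proof -
  have "\<mu> = (\<Sum>i\<in>UNIV. single i (lookup \<mu> i))"
    by (rule poly_mapping_eqI) (simp add: lookup_sum lookup_single when_def)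
  then show ?thesis
    by (simp add: Var_power prod_single_1 Const_mult_single)
qed

lemma mpoly_induct [case_names Const Var mult add]:
  fixes p :: "('n::finite, 'a::comm_semiring_1) mpoly"
  assumes Const: "\<And>c. P (Const c)" and Var: "\<And>i. P (Var i)"
    and mult: "\<And>p q. P p \<Longrightarrow> P q \<Longrightarrow> P (p * q)" and add: "\<And>p q. P p \<Longrightarrow> P q \<Longrightarrow> P (p + q)"
  shows "P p"
proof (induction p rule: poly_mapping_induct)
  case zero
  show ?case
    using Const[of 0] by simp
next
  case (single \<mu> c)
  have "P (\<Prod>i\<in>I. Var i ^ k i)" if "finite I" for I and k :: "'n \<Rightarrow> nat"
  proof -
    have "P (Var i ^ n)" for i n
      using Const[of 1] by (induction n) (simp_all add: mult Var)
    with that show ?thesis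
      using Const[of 1] by induction (simp_all add: mult)
  qed
  then show ?case
    by (simp add: single_eq_Const_mult_prod_Var mult Const)
qed (rule add)

section \<open>Linear changes of variables\<close>

definition lin_form :: "'a^'n^'n \<Rightarrow> 'n \<Rightarrow> ('n::finite, 'a::comm_semiring_1) mpoly" where
  "lin_form A i = (\<Sum>j\<in>UNIV. Const (A $ i $ j) * Var j)"

lemma sum_Const_mult_lin_form:
  "(\<Sum>j\<in>UNIV. Const (C $ k $ j) * lin_form A j) = lin_form (C ** A) k"
proof -
  have "(\<Sum>j\<in>UNIV. Const (C $ k $ j) * lin_form A j)
      = (\<Sum>j\<in>UNIV. \<Sum>l\<in>UNIV. Const (C $ k $ j) * Const (A $ j $ l) * Var l)"
    by (simp add: lin_form_def sum_distrib_left mult.assoc)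
  also have "\<dots> = (\<Sum>l\<in>UNIV. Const ((C ** A) $ k $ l) * Var l)"
    by (subst sum.swap) (simp add: matrix_matrix_mult_def Const_sum Const_mult sum_distrib_right)
  finally show ?thesis
    by (simp add: lin_form_def)
qed

lemma lin_change_eq_subst: "lin_change A = subst (lin_form A)"
  by (intro ext) (simp add: lin_change_def lin_form_def[abs_def])

lemma lin_change_0 [simp]: "lin_change A 0 = 0"
  by (simp add: lin_change_eq_subst)

lemma lin_change_add: "lin_change A (p + q) = lin_change A p + lin_change A q"
  by (simp add: lin_change_eq_subst subst_add)

lemma lin_change_sum: "lin_change A (sum g S) = (\<Sum>x\<in>S. lin_change A (g x))"
  by (simp add: lin_change_eq_subst subst_sum)

lemma lin_change_mult: "lin_change A (p * q) = lin_change A p * lin_change A q"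
  by (simp add: lin_change_eq_subst subst_mult)

lemma lin_change_Const: "lin_change A (Const c) = Const c"
  by (simp add: lin_change_eq_subst subst_Const)

lemma lin_change_Const_mult: "lin_change A (Const c * p) = Const c * lin_change A p"
  by (simp add: lin_change_mult lin_change_Const)

lemma lin_change_Var: "lin_change A (Var i) = lin_form A i"
  by (simp add: lin_change_eq_subst subst_Var)

lemma lin_change_lin_form: "lin_change A (lin_form C k) = lin_form (C ** A) k"
  by (simp add: lin_form_def[of C k] lin_change_sum lin_change_Const_mult lin_change_Var
      sum_Const_mult_lin_form)

lemma lin_change_lin_change: "lin_change A (lin_change C p) = lin_change (C ** A) p"
  by (induction p rule: mpoly_induct)
    (simp_all add: lin_change_Const lin_change_Var lin_change_lin_form lin_change_mult lin_change_add)

lemma lin_form_mat_1: "lin_form (mat 1) i = Var i"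
  by (simp add: lin_form_def mat_def if_distrib[of Const] if_distrib[of "\<lambda>x. x * _"] cong: if_cong)

lemma lin_change_mat_1: "lin_change (mat 1) p = p"
  by (induction p rule: mpoly_induct)
    (simp_all add: lin_change_Const lin_change_Var lin_form_mat_1 lin_change_mult lin_change_add)

lemma matrix_inv_right: "invertible A \<Longrightarrow> A ** matrix_inv A = mat 1"
  and matrix_inv_left: "invertible A \<Longrightarrow> matrix_inv A ** A = mat 1"
  unfolding invertible_def matrix_inv_def by (metis (mono_tags, lifting) someI_ex)+

lemma lin_change_matrix_inv_cancel:
  assumes "invertible A"
  shows "lin_change (matrix_inv A) (lin_change A p) = p"
    and "lin_change A (lin_change (matrix_inv A) p) = p"
  by (simp_all add: lin_change_lin_change lin_change_mat_1 matrix_inv_left matrix_inv_right assms)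

lemma lin_change_eq_0_iff: "invertible A \<Longrightarrow> lin_change A p = 0 \<longleftrightarrow> p = 0"
  by (metis lin_change_0 lin_change_matrix_inv_cancel(1))

section \<open>The Lie algebra of a polynomial\<close>

definition lie_deriv :: "'a^'n^'n \<Rightarrow> ('n::finite, 'a::comm_semiring_1) mpoly \<Rightarrow> ('n, 'a) mpoly" where
  "lie_deriv B P = (\<Sum>i\<in>UNIV. lin_form B i * pdiff i P)"

lemma mem_lie_alg_iff: "B \<in> lie_alg P \<longleftrightarrow> lie_deriv B P = 0"
  by (simp add: lie_alg_def lie_deriv_def lin_form_def sum_distrib_right)

lemma lie_deriv_0 [simp]: "lie_deriv B 0 = 0"
  by (simp add: lie_deriv_def)

lemma lie_alg_0 [simp]: "lie_alg 0 = UNIV"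
  by (simp add: mem_lie_alg_iff set_eq_iff)

lemma lie_deriv_add: "lie_deriv B (p + q) = lie_deriv B p + lie_deriv B q"
  by (simp add: lie_deriv_def pdiff_add distrib_left sum.distrib)

lemma lie_deriv_sum: "lie_deriv B (sum g S) = (\<Sum>x\<in>S. lie_deriv B (g x))"
  by (induction S rule: infinite_finite_induct) (simp_all add: lie_deriv_add)

lemma lie_deriv_mult: "lie_deriv B (p * q) = lie_deriv B p * q + p * lie_deriv B q"
  by (simp add: lie_deriv_def pdiff_mult distrib_left sum.distrib sum_distrib_left sum_distrib_right ac_simps)

lemma lie_deriv_Const [simp]: "lie_deriv B (Const c) = 0"
  by (simp add: lie_deriv_def)

lemma lie_deriv_Const_mult: "lie_deriv B (Const c * p) = Const c * lie_deriv B p"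
  by (simp add: lie_deriv_mult)

lemma lie_deriv_Var: "lie_deriv B (Var k) = lin_form B k"
  by (simp add: lie_deriv_def pdiff_Var if_distrib[of "\<lambda>x. _ * x"] cong: if_cong)

lemma lie_deriv_lin_form: "lie_deriv B (lin_form A k) = lin_form (A ** B) k"
  by (simp add: lin_form_def[of A k] lie_deriv_sum lie_deriv_Const_mult lie_deriv_Var
      sum_Const_mult_lin_form)

(* The chain rule for derivations along the linear vector fields x -> B x and x -> C x. *)
lemma lie_deriv_lin_change:
  assumes "C ** A = A ** B"
  shows "lie_deriv B (lin_change A p) = lin_change A (lie_deriv C p)"
proof (induction p rule: mpoly_induct)
  case (Var k)
  show ?case
    by (simp add: lin_change_Var lie_deriv_lin_form lie_deriv_Var lin_change_lin_form assms)
qed (simp_all add: lin_change_Const lin_change_mult lie_deriv_mult lin_change_add lie_deriv_add)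

lemma matrix_conj_cancel:
  fixes A B :: "'a::semiring_1^'n::finite^'n"
  assumes "invertible A"
  shows "matrix_inv A ** (A ** B ** matrix_inv A) ** A = B"
    and "A ** (matrix_inv A ** B ** A) ** matrix_inv A = B"
proof -
  have "matrix_inv A ** (A ** B ** matrix_inv A) ** A = (matrix_inv A ** A) ** B ** (matrix_inv A ** A)"
    and "A ** (matrix_inv A ** B ** A) ** matrix_inv A = (A ** matrix_inv A) ** B ** (A ** matrix_inv A)"
    by (simp_all add: matrix_mul_assoc)
  then show "matrix_inv A ** (A ** B ** matrix_inv A) ** A = B"
    and "A ** (matrix_inv A ** B ** A) ** matrix_inv A = B"
    by (simp_all add: matrix_inv_left matrix_inv_right assms)
qed

lemma inj_matrix_conj:
  fixes A :: "'a::semiring_1^'n::finite^'n"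
  assumes "invertible A"
  shows "inj (\<lambda>B. matrix_inv A ** B ** A)"
  by (rule inj_on_inverseI[where g = "\<lambda>C. A ** C ** matrix_inv A"]) (rule matrix_conj_cancel(2)[OF assms])

lemma lie_alg_lin_change:
  assumes "invertible A"
  shows "lie_alg (lin_change A P) = (\<lambda>B. matrix_inv A ** B ** A) ` lie_alg P"
proof -
  have conj: "B \<in> lie_alg (lin_change A P) \<longleftrightarrow> A ** B ** matrix_inv A \<in> lie_alg P" for B
  proof -
    have "A ** B ** matrix_inv A ** A = A ** B"
      by (simp add: matrix_inv_left assms flip: matrix_mul_assoc)
    then have "lie_deriv B (lin_change A P) = lin_change A (lie_deriv (A ** B ** matrix_inv A) P)"
      by (rule lie_deriv_lin_change)
    then show ?thesis
      by (simp add: mem_lie_alg_iff lin_change_eq_0_iff assms)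
  qed
  show ?thesis
  proof (intro set_eqI iffI)
    fix B
    assume "B \<in> lie_alg (lin_change A P)"
    then show "B \<in> (\<lambda>B. matrix_inv A ** B ** A) ` lie_alg P"
      using matrix_conj_cancel(1)[OF assms, of B] conj by (metis image_eqI)
  next
    fix B
    assume "B \<in> (\<lambda>B. matrix_inv A ** B ** A) ` lie_alg P"
    then show "B \<in> lie_alg (lin_change A P)"
      using matrix_conj_cancel(2)[OF assms] conj by auto
  qed
qed

lemma lie_alg_Const_mult:
  "c \<noteq> 0 \<Longrightarrow> lie_alg (Const c * P) = lie_alg (P :: ('n::finite, 'a::idom) mpoly)"
  by (simp add: set_eq_iff mem_lie_alg_iff lie_deriv_Const_mult Const_mult_eq_0_iff)

section \<open>Diagonal matrices, homogeneity and monomials\<close>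

definition diag_matrix :: "('n \<Rightarrow> 'a::zero) \<Rightarrow> 'a^'n^'n" where
  "diag_matrix d = (\<chi> i j. if i = j then d i else 0)"

lemma mat_1_eq_diag_matrix: "mat 1 = diag_matrix (\<lambda>_. 1)"
  by (simp add: mat_def diag_matrix_def)

lemma lin_form_diag_matrix: "lin_form (diag_matrix d) i = Const (d i) * Var i"
  by (simp add: lin_form_def diag_matrix_def if_distrib[of Const] if_distrib[of "\<lambda>x. x * _"] cong: if_cong)

lemma lookup_lie_deriv_diag_matrix:
  "lookup (lie_deriv (diag_matrix d) p) \<nu> = (\<Sum>i\<in>UNIV. d i * of_nat (lookup \<nu> i)) * lookup p \<nu>"
proof (induction p rule: poly_mapping_induct)
  case (single \<mu> c)
  have "lie_deriv (diag_matrix d) (single \<mu> c) = (\<Sum>i\<in>UNIV. single \<mu> (d i * of_nat (lookup \<mu> i) * c))"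
    by (simp add: lie_deriv_def lin_form_diag_matrix mult.assoc Var_mult_pdiff_single Const_mult_single)
  then show ?case
    by (simp add: lookup_sum lookup_single when_def sum_distrib_right)
qed (simp_all add: lie_deriv_add lookup_add distrib_left)

lemma homogeneous_iff_lie_deriv_mat_1:
  fixes p :: "('n::finite, 'a::{idom,ring_char_0}) mpoly"
  shows "homogeneous d p \<longleftrightarrow> lie_deriv (mat 1) p = Const (of_nat d) * p"
proof -
  have "lie_deriv (mat 1) p = Const (of_nat d) * p
      \<longleftrightarrow> (\<forall>\<nu>. of_nat (\<Sum>i\<in>UNIV. lookup \<nu> i) * lookup p \<nu> = of_nat d * lookup p \<nu>)"
    by (simp add: poly_mapping_eq_iff fun_eq_iff mat_1_eq_diag_matrix lookup_lie_deriv_diag_matrix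
        lookup_Const_mult)
  also have "\<dots> \<longleftrightarrow> homogeneous d p"
    by (auto simp: homogeneous_def in_keys_iff simp flip: of_nat_sum)
  finally show ?thesis ..
qed

lemma homogeneous_lin_change:
  fixes p :: "('n::finite, 'a::{idom,ring_char_0}) mpoly"
  assumes "homogeneous d p"
  shows "homogeneous d (lin_change A p)"
proof -
  have "lie_deriv (mat 1) (lin_change A p) = lin_change A (lie_deriv (mat 1) p)"
    by (rule lie_deriv_lin_change) simp
  with assms show ?thesis
    by (simp add: homogeneous_iff_lie_deriv_mat_1 lin_change_Const_mult)
qed

lemma monomial_of_eq_single: "monomial_of \<alpha> = single (Abs_poly_mapping \<alpha>) 1"
proof -
  have "(\<Sum>i\<in>UNIV. single i (\<alpha> i)) = Abs_poly_mapping \<alpha>"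
    by (rule poly_mapping_eqI) (simp add: lookup_sum lookup_single when_def)
  then show ?thesis
    by (simp add: monomial_of_def Var_power prod_single_1)
qed

lemma monomial_of_neq_0: "monomial_of \<alpha> \<noteq> (0 :: ('n::finite, 'a::comm_semiring_1) mpoly)"
proof -
  have "lookup (monomial_of \<alpha> :: ('n, 'a) mpoly) (Abs_poly_mapping \<alpha>) = 1"
    by (simp add: monomial_of_eq_single)
  then show ?thesis
    by auto
qed

lemma homogeneous_monomial_of: "homogeneous (\<Sum>i\<in>UNIV. \<alpha> i) (monomial_of \<alpha>)"
  by (simp add: homogeneous_def monomial_of_eq_single)

lemma mat_1_notin_lie_alg_monomial_of:
  assumes "(\<Sum>i\<in>UNIV. \<alpha> i) \<noteq> 0"
  shows "mat 1 \<notin> lie_alg (monomial_of \<alpha> :: ('n::finite, 'a::{idom,ring_char_0}) mpoly)"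
proof -
  have "homogeneous (\<Sum>i\<in>UNIV. \<alpha> i) (monomial_of \<alpha> :: ('n, 'a) mpoly)"
    by (rule homogeneous_monomial_of)
  with assms show ?thesis
    by (simp add: mem_lie_alg_iff homogeneous_iff_lie_deriv_mat_1 Const_mult_eq_0_iff monomial_of_neq_0
        del: of_nat_sum)
qed

lemma diag_matrix_mem_lie_alg_monomial_of:
  assumes "(\<Sum>i\<in>UNIV. d i * of_nat (\<alpha> i)) = 0"
  shows "diag_matrix d \<in> lie_alg (monomial_of \<alpha>)"
proof -
  have "lookup (lie_deriv (diag_matrix d) (monomial_of \<alpha>)) \<nu> = 0" for \<nu>
    by (cases "\<nu> = Abs_poly_mapping \<alpha>")
      (simp_all add: lookup_lie_deriv_diag_matrix monomial_of_eq_single lookup_single assms)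
  then show ?thesis
    by (simp add: mem_lie_alg_iff poly_mapping_eq_iff fun_eq_iff)
qed

lemma diag_matrix_mem_lie_algD:
  fixes p :: "('n::finite, 'a::idom) mpoly"
  assumes "diag_matrix d \<in> lie_alg p" and "\<nu> \<in> keys p"
  shows "(\<Sum>i\<in>UNIV. d i * of_nat (lookup \<nu> i)) = 0"
  using assms lookup_lie_deriv_diag_matrix[of d p \<nu>] by (simp add: mem_lie_alg_iff in_keys_iff)

lemma proportional_eq_if_sum_eq:
  fixes \<alpha> \<nu> :: "'n::finite \<Rightarrow> nat"
  assumes ratio: "\<And>i j. \<alpha> j * \<nu> i = \<alpha> i * \<nu> j" and sums: "sum \<nu> UNIV = sum \<alpha> UNIV"
  shows "\<nu> = \<alpha>"
proof
  fix i
  have "\<nu> i * sum \<alpha> UNIV = (\<Sum>j\<in>UNIV. \<alpha> j * \<nu> i)"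
    by (simp add: sum_distrib_left sum_distrib_right mult.commute)
  also have "\<dots> = (\<Sum>j\<in>UNIV. \<alpha> i * \<nu> j)"
    by (rule sum.cong[OF refl]) (rule ratio)
  also have "\<dots> = \<alpha> i * sum \<alpha> UNIV"
    by (simp add: sums flip: sum_distrib_left)
  finally have "\<nu> i * sum \<alpha> UNIV = \<alpha> i * sum \<alpha> UNIV" .
  then show "\<nu> i = \<alpha> i"
    using sums by (cases "sum \<alpha> UNIV = 0") auto
qed

lemma homogeneous_multiple_of_monomial_of:
  fixes h :: "('n::finite, 'a::{idom,ring_char_0}) mpoly"
  assumes hom: "homogeneous (\<Sum>i\<in>UNIV. \<alpha> i) h" and sub: "lie_alg (monomial_of \<alpha>) \<subseteq> lie_alg h"
  obtains c where "h = Const c * monomial_of \<alpha>"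
proof
  have keys_h: "\<nu> = Abs_poly_mapping \<alpha>" if \<nu>: "\<nu> \<in> keys h" for \<nu>
  proof -
    have "\<alpha> j * lookup \<nu> i = \<alpha> i * lookup \<nu> j" for i j
    proof -
      \<comment> \<open>the weight w = \<alpha>_j e_i - \<alpha>_i e_j is orthogonal to \<alpha>\<close>
      define w :: "'n \<Rightarrow> 'a"
        where "w k = (if k = i then of_nat (\<alpha> j) else 0) - (if k = j then of_nat (\<alpha> i) else 0)" for k
      have weight: "(\<Sum>k\<in>UNIV. w k * of_nat (x k)) = of_nat (\<alpha> j * x i) - of_nat (\<alpha> i * x j)" for x
        by (simp add: w_def left_diff_distrib sum_subtractf if_distrib[of "\<lambda>t. t * _"] cong: if_cong)
      have "diag_matrix w \<in> lie_alg h"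
        using sub diag_matrix_mem_lie_alg_monomial_of[of w \<alpha>] by (auto simp: weight)
      from diag_matrix_mem_lie_algD[OF this \<nu>] show ?thesis
        by (simp only: weight right_minus_eq of_nat_eq_iff)
    qed
    moreover have "(\<Sum>i\<in>UNIV. lookup \<nu> i) = (\<Sum>i\<in>UNIV. \<alpha> i)"
      using hom \<nu> by (simp add: homogeneous_def)
    ultimately have "lookup \<nu> = \<alpha>"
      by (rule proportional_eq_if_sum_eq)
    then show ?thesis
      by (simp add: poly_mapping_eq_iff)
  qed
  have "lookup h \<nu> = lookup (Const (lookup h (Abs_poly_mapping \<alpha>)) * monomial_of \<alpha>) \<nu>" for \<nu>
  proof (cases "\<nu> = Abs_poly_mapping \<alpha>")
    case False
    then have "lookup h \<nu> = 0"
      by (metis in_keys_iff keys_h)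
    with False show ?thesis
      by (simp add: lookup_Const_mult monomial_of_eq_single lookup_single)
  qed (simp add: lookup_Const_mult monomial_of_eq_single)
  then show "h = Const (lookup h (Abs_poly_mapping \<alpha>)) * monomial_of \<alpha>"
    by (rule poly_mapping_eqI)
qed

theorem theorem1:
  fixes \<alpha> :: "'n::finite \<Rightarrow> nat"
    and f :: "('n, 'a::field_char_0) mpoly"
    and A :: "'a^'n^'n"
  assumes "\<forall>i. \<alpha> i \<ge> 1"
    and "homogeneous (\<Sum>i\<in>UNIV. \<alpha> i) f"
    and "invertible A"
  shows "(\<exists>c. lin_change A (monomial_of \<alpha>) = Const c * f)
     \<longleftrightarrow> lie_alg f = (\<lambda>B. matrix_inv A ** B ** A) ` lie_alg (monomial_of \<alpha>)"
proof
  assume "\<exists>c. lin_change A (monomial_of \<alpha>) = Const c * f"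
  then obtain c where c: "lin_change A (monomial_of \<alpha>) = Const c * f" ..
  moreover have "lin_change A (monomial_of \<alpha>) \<noteq> 0"
    by (simp add: lin_change_eq_0_iff assms(3) monomial_of_neq_0)
  ultimately have "c \<noteq> 0"
    by auto
  then have "lie_alg f = lie_alg (lin_change A (monomial_of \<alpha>))"
    by (simp add: c lie_alg_Const_mult)
  then show "lie_alg f = (\<lambda>B. matrix_inv A ** B ** A) ` lie_alg (monomial_of \<alpha>)"
    by (simp add: lie_alg_lin_change assms(3))
next
  assume ii: "lie_alg f = (\<lambda>B. matrix_inv A ** B ** A) ` lie_alg (monomial_of \<alpha>)"
  define h where "h = lin_change (matrix_inv A) f"
  have f: "f = lin_change A h"
    by (simp add: h_def lin_change_matrix_inv_cancel assms(3))
  have lie_h: "lie_alg h = lie_alg (monomial_of \<alpha>)"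
    using ii inj_image_eq_iff[OF inj_matrix_conj[OF assms(3)]] by (simp add: f lie_alg_lin_change assms(3))
  have "homogeneous (\<Sum>i\<in>UNIV. \<alpha> i) h"
    by (simp add: h_def homogeneous_lin_change assms(2))
  then obtain c where h: "h = Const c * monomial_of \<alpha>"
    by (rule homogeneous_multiple_of_monomial_of) (simp add: lie_h)
  have "c \<noteq> 0"
  proof
    assume "c = 0"
    then have "mat 1 \<in> lie_alg (monomial_of \<alpha> :: ('n, 'a) mpoly)"
      using lie_h h by simp
    moreover have "(\<Sum>i\<in>UNIV. \<alpha> i) \<noteq> 0"
      using assms(1) by (metis UNIV_I finite sum_eq_0_iff not_one_le_zero)
    ultimately show False
      using mat_1_notin_lie_alg_monomial_of by blast
  qed
  then have "lin_change A (monomial_of \<alpha>) = Const (inverse c) * f"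
    by (simp add: f h lin_change_Const_mult Const_inverse_mult_cancel)
  then show "\<exists>c. lin_change A (monomial_of \<alpha>) = Const c * f" ..
qed

end
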